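(* Let $m^*$ be the exact model of the environment, fix a base policy $\pi^b$, and let $\bar m,\bar{\bar m}\in\mathcal{M}$. Suppose $\bar m$ is a PCM or a PRM of $m^*$ with respect to $\bar\Pi=\{\pi_{\bar m}^r,\pi_{\bar m}^{ce}\}$ and $J$, and $\bar{\bar m}$ is a performance-minimizing model (PNM) of $m^*$ with respect to $\bar{\bar\Pi}=\{\pi_{\bar{\bar m}}^r,\pi_{\bar{\bar m}}^{ce}\}$ and $J$. Then $J_{m^*}^{\pi_{\bar m}^r}\ge J_{m^*}^{\pi_{\bar{\bar m}}^{ce}}$.
   Context: Fix finite sets $\mathcal{S}$ (states) and $\mathcal{A}$ (actions) and a discount factor $\gamma\in[0,1)$. A model is a triple $m=(p,r,d)$ with transition kernel $p:\mathcal{S}\times\mathcal{A}\times\mathcal{S}\to[0,1]$, reward function $r:\mathcal{S}\times\mathcal{A}\times\mathcal{S}\to\mathbb{R}$ and initial state distribution $d$ on $\mathcal{S}$; $\mathcal{M}$ is the set of all such models, and $m^*\in\mathcal{M}$ denotes the exact model of the environment. A policy is a map $\pi:\mathcal{S}\times\mathcal{A}\to[0,1]$ giving a distribution over actions at each state; $\mathbb{\Pi}$ is the set of all policies. For $m=(p,r,d)$ and $\pi\in\mathbb{\Pi}$, the performance is $J_m^\pi=\mathbb{E}_{\pi,p}[\sum_{t=0}^\infty\gamma^t r(S_t,A_t,S_{t+1})\mid S_0\sim d]$. Given the base policy $\pi^b$ and a model $m$, the rollout policy $\pi_m^r$ is the policy obtained by one step of policy iteration on $\pi^b$ in $m$ (policy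 evaluation of $\pi^b$ in $m$ followed by greedy policy improvement), and the certainty-equivalence policy $\pi_m^{ce}$ is the policy obtained by running policy iteration or value iteration to convergence in $m$ starting from $\pi^b$ (an optimal policy of $m$). Given $\Pi\subseteq\mathbb{\Pi}$: $m$ is a PCM of $m^*$ w.r.t. $\Pi$ and $J$ if for all $\pi^i,\pi^j\in\Pi$, $J_m^{\pi^i}\ge J_m^{\pi^j}$ implies $J_{m^*}^{\pi^i}\le J_{m^*}^{\pi^j}$; $m$ is a PRM of $m^*$ w.r.t. $\Pi$ and $J$ if for all $\pi^i,\pi^j\in\Pi$, $J_m^{\pi^i}\ge J_m^{\pi^j}$ implies $J_{m^*}^{\pi^i}\ge J_{m^*}^{\pi^j}$; $m$ is a PNM of $m^*$ w.r.t. $\Pi$ and $J$ if $m$ is a PCM of $m^*$ w.r.t. $\Pi$ and $J$ and every optimal policy $\pi_m^*$ of $m$ that belongs to $\Pi$ satisfies $J_{m^*}^{\pi_m^*}=\min_{\pi\in\mathbb{\Pi}}J_{m^*}^{\pi}$. *)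

theory Defs
  imports Complex_Main
begin

text \<open>Finite MDP setting. States: type 's::finite, actions: type 'a::finite.
  A model is a triple (p, r, d); a policy maps a state to a distribution over actions.\<close>

type_synonym ('s, 'a) model =
  "('s \<Rightarrow> 'a \<Rightarrow> 's \<Rightarrow> real) \<times> ('s \<Rightarrow> 'a \<Rightarrow> 's \<Rightarrow> real) \<times> ('s \<Rightarrow> real)"

type_synonym ('s, 'a) policy = "'s \<Rightarrow> 'a \<Rightarrow> real"

definition is_distr :: "('b::finite \<Rightarrow> real) \<Rightarrow> bool" where
  "is_distr q \<longleftrightarrow> (\<forall>x. 0 \<le> q x) \<and> (\<Sum>x\<in>UNIV. q x) = 1"

definition valid_model :: "('s::finite, 'a::finite) model \<Rightarrow> bool" where
  "valid_model m \<longleftrightarrow> (case m of (p, r, d) \<Rightarrow> (\<forall>s a. is_distr (p s a)) \<and> is_distr d)"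

definition valid_policy :: "('s::finite, 'a::finite) policy \<Rightarrow> bool" where
  "valid_policy \<pi> \<longleftrightarrow> (\<forall>s. is_distr (\<pi> s))"

definition det_policy :: "('s::finite, 'a::finite) policy \<Rightarrow> bool" where
  "det_policy \<pi> \<longleftrightarrow> (\<exists>f. \<forall>s. \<pi> s = (\<lambda>a. if a = f s then 1 else 0))"

primrec state_dist :: "('s::finite, 'a::finite) model \<Rightarrow> ('s, 'a) policy \<Rightarrow> nat \<Rightarrow> 's \<Rightarrow> real" where
  "state_dist m \<pi> 0 = snd (snd m)"
| "state_dist m \<pi> (Suc t) =
     (\<lambda>s'. \<Sum>s\<in>UNIV. state_dist m \<pi> t s * (\<Sum>a\<in>UNIV. \<pi> s a * fst m s a s'))"

definition perf :: "real \<Rightarrow> ('s::finite, 'a::finite) model \<Rightarrow> ('s, 'a) policy \<Rightarrow> real" where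
  "perf \<gamma> m \<pi> = (\<Sum>t. \<gamma> ^ t * (\<Sum>s\<in>UNIV. state_dist m \<pi> t s *
       (\<Sum>a\<in>UNIV. \<pi> s a * (\<Sum>s'\<in>UNIV. fst m s a s' * fst (snd m) s a s'))))"

definition value_fn :: "real \<Rightarrow> ('s::finite, 'a::finite) model \<Rightarrow> ('s, 'a) policy \<Rightarrow> 's \<Rightarrow> real" where
  "value_fn \<gamma> m \<pi> s = perf \<gamma> (fst m, fst (snd m), (\<lambda>s'. if s' = s then 1 else 0)) \<pi>"

definition q_fn :: "real \<Rightarrow> ('s::finite, 'a::finite) model \<Rightarrow> ('s, 'a) policy \<Rightarrow> 's \<Rightarrow> 'a \<Rightarrow> real" where
  "q_fn \<gamma> m \<pi> s a =
     (\<Sum>s'\<in>UNIV. fst m s a s' * (fst (snd m) s a s' + \<gamma> * value_fn \<gamma> m \<pi> s'))"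

text \<open>Rollout policy: one step of policy iteration on the base policy in m
  (evaluation of pib in m, then greedy (deterministic) improvement; any tie-breaking).\<close>
definition is_rollout :: "real \<Rightarrow> ('s::finite, 'a::finite) model \<Rightarrow> ('s, 'a) policy \<Rightarrow> ('s, 'a) policy \<Rightarrow> bool" where
  "is_rollout \<gamma> m \<pi>b \<pi> \<longleftrightarrow>
     (\<exists>f. (\<forall>s. \<pi> s = (\<lambda>a. if a = f s then 1 else 0)) \<and>
          (\<forall>s a. q_fn \<gamma> m \<pi>b s a \<le> q_fn \<gamma> m \<pi>b s (f s)))"

definition optimal_policy :: "real \<Rightarrow> ('s::finite, 'a::finite) model \<Rightarrow> ('s, 'a) policy \<Rightarrow> bool" where
  "optimal_policy \<gamma> m \<pi> \<longleftrightarrow> valid_policy \<pi> \<and>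
     (\<forall>\<pi>'. valid_policy \<pi>' \<longrightarrow> (\<forall>s. value_fn \<gamma> m \<pi>' s \<le> value_fn \<gamma> m \<pi> s))"

text \<open>Certainty-equivalence policy: the (deterministic) optimal policy of m to which
  policy/value iteration converges (any tie-breaking).\<close>
definition is_ce :: "real \<Rightarrow> ('s::finite, 'a::finite) model \<Rightarrow> ('s, 'a) policy \<Rightarrow> bool" where
  "is_ce \<gamma> m \<pi> \<longleftrightarrow> det_policy \<pi> \<and> optimal_policy \<gamma> m \<pi>"

definition PCM :: "real \<Rightarrow> ('s::finite, 'a::finite) model \<Rightarrow> ('s, 'a) model \<Rightarrow> ('s, 'a) policy set \<Rightarrow> bool" where
  "PCM \<gamma> m mstar \<Pi> \<longleftrightarrow> (\<forall>\<pi>i\<in>\<Pi>. \<forall>\<pi>j\<in>\<Pi>.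
     perf \<gamma> m \<pi>i \<ge> perf \<gamma> m \<pi>j \<longrightarrow> perf \<gamma> mstar \<pi>i \<le> perf \<gamma> mstar \<pi>j)"

definition PRM :: "real \<Rightarrow> ('s::finite, 'a::finite) model \<Rightarrow> ('s, 'a) model \<Rightarrow> ('s, 'a) policy set \<Rightarrow> bool" where
  "PRM \<gamma> m mstar \<Pi> \<longleftrightarrow> (\<forall>\<pi>i\<in>\<Pi>. \<forall>\<pi>j\<in>\<Pi>.
     perf \<gamma> m \<pi>i \<ge> perf \<gamma> m \<pi>j \<longrightarrow> perf \<gamma> mstar \<pi>i \<ge> perf \<gamma> mstar \<pi>j)"

definition PNM :: "real \<Rightarrow> ('s::finite, 'a::finite) model \<Rightarrow> ('s, 'a) model \<Rightarrow> ('s, 'a) policy set \<Rightarrow> bool" where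
  "PNM \<gamma> m mstar \<Pi> \<longleftrightarrow> PCM \<gamma> m mstar \<Pi> \<and>
     (\<forall>\<pi>\<in>\<Pi>. optimal_policy \<gamma> m \<pi> \<longrightarrow>
        (\<forall>\<pi>'. valid_policy \<pi>' \<longrightarrow> perf \<gamma> mstar \<pi> \<le> perf \<gamma> mstar \<pi>'))"

end

theory Submission
  imports Defs
begin

lemma det_policy_valid: "det_policy \<pi> \<Longrightarrow> valid_policy \<pi>"
  unfolding det_policy_def valid_policy_def is_distr_def by auto

lemma rollout_det_policy: "is_rollout \<gamma> m \<pi>b \<pi> \<Longrightarrow> det_policy \<pi>"
  unfolding is_rollout_def det_policy_def by blast

lemma ce_optimal_policy: "is_ce \<gamma> m \<pi> \<Longrightarrow> optimal_policy \<gamma> m \<pi>"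
  unfolding is_ce_def by blast

lemma PNM_optimal_perf_le:
  assumes "PNM \<gamma> m mstar \<Pi>" and "\<pi> \<in> \<Pi>" and "optimal_policy \<gamma> m \<pi>"
    and "valid_policy \<pi>'"
  shows "perf \<gamma> mstar \<pi> \<le> perf \<gamma> mstar \<pi>'"
  using assms unfolding PNM_def by blast

theorem proposition3:
  fixes \<gamma> :: real
    and mstar m1 m2 :: "('s::finite, 'a::finite) model"
    and \<pi>b \<pi>r1 \<pi>ce1 \<pi>r2 \<pi>ce2 :: "('s, 'a) policy"
  assumes "0 \<le> \<gamma>" and "\<gamma> < 1"
    and "valid_model mstar" and "valid_model m1" and "valid_model m2"
    and "valid_policy \<pi>b"
    and "is_rollout \<gamma> m1 \<pi>b \<pi>r1" and "is_ce \<gamma> m1 \<pi>ce1"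
    and "is_rollout \<gamma> m2 \<pi>b \<pi>r2" and "is_ce \<gamma> m2 \<pi>ce2"
    and "PCM \<gamma> m1 mstar {\<pi>r1, \<pi>ce1} \<or> PRM \<gamma> m1 mstar {\<pi>r1, \<pi>ce1}"
    and "PNM \<gamma> m2 mstar {\<pi>r2, \<pi>ce2}"
  shows "perf \<gamma> mstar \<pi>r1 \<ge> perf \<gamma> mstar \<pi>ce2"
proof -
  have "valid_policy \<pi>r1"
    using \<open>is_rollout \<gamma> m1 \<pi>b \<pi>r1\<close> by (intro det_policy_valid rollout_det_policy)
  moreover have "optimal_policy \<gamma> m2 \<pi>ce2"
    using \<open>is_ce \<gamma> m2 \<pi>ce2\<close> by (rule ce_optimal_policy)
  ultimately show ?thesis
    using PNM_optimal_perf_le[OF \<open>PNM \<gamma> m2 mstar {\<pi>r2, \<pi>ce2}\<close>] by simp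
qed

end
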